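(* Let $\varepsilon,\delta\geq 0$ and let $\mathcal{M},\mathcal{N}$ be CTMCs with $\mathcal{M}\sim_{\varepsilon,\delta}\mathcal{N}$. Then there are CTMCs $\mathcal{M}'$ and $\mathcal{N}'$ with the same graph structure such that $\mathcal{M}\sim_{\varepsilon,0}\mathcal{M}'$, $\mathcal{M}'\sim_{0,\delta}\mathcal{N}'$, and $\mathcal{N}'\sim\mathcal{N}$.
   Context: A CTMC is a tuple $(S,P,E,s_{init},L)$ with $S$ a finite nonempty set of states, $P\colon S\to\mathrm{Distr}(S)$ a transition probability function (self-loops allowed; $P(s,A)=\sum_{a\in A}P(s,a)$), $E\colon S\to\mathbb{R}_{>0}$ an exit rate function, $s_{init}\in S$ an initial state and $L\colon S\to 2^{AP}$ a labeling. Two CTMCs have the same graph structure if they have the same state set, initial state, labeling, and the same pairs of states connected by transitions of positive probability. For a relation $R\subseteq S\times S$ and $A\subseteq S$, $R(A)=\{t\mid\exists s\in A:(s,t)\in R\}$. For $\varepsilon,\delta\geq0$, a reflexive symmetric relation $R$ on the states of a CTMC is an $(\varepsilon,\delta)$-bisimulation if for all $(s,s')\in R$: $L(s)=L(s')$, $|\ln E(s)-\ln E(s')|\leq\delta$, and $P(s,A)\leq P(s',R(A))+\varepsilon$ for all sets of states $A$; $s\sim_{\varepsilon,\delta}s'$ if some $(\varepsilon,\delta)$-bisimulation contains $(s,s')$. A strong bisimulation is an equivalence $R$ with $L(s)=L(s')$, $E(s)=E(s')$ and $P(s,C)=P(s',C)$ for every equivalence class $C$ whenever $(s,s')\in R$;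 $s\sim s'$ if some strong bisimulation contains $(s,s')$. For CTMCs $\mathcal{M}_1,\mathcal{M}_2$, the direct sum $\mathcal{M}_1\oplus\mathcal{M}_2$ is their disjoint union; $\mathcal{M}_1\sim_{\varepsilon,\delta}\mathcal{M}_2$ (resp. $\mathcal{M}_1\sim\mathcal{M}_2$) means that the initial states of $\mathcal{M}_1$ and $\mathcal{M}_2$ satisfy $\sim_{\varepsilon,\delta}$ (resp. $\sim$) in $\mathcal{M}_1\oplus\mathcal{M}_2$. *)

theory Defs
  imports Complex_Main
begin

text \<open>A CTMC (S, P, E, s_init, L). Transition probabilities are given as a
  function P s t, with P(s, A) = sum of P s t over t in A.\<close>

record ('s, 'ap) ctmc =
  states :: "'s set"
  prob :: "'s \<Rightarrow> 's \<Rightarrow> real"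
  rate :: "'s \<Rightarrow> real"
  initial :: "'s"
  label :: "'s \<Rightarrow> 'ap set"

definition is_ctmc :: "('s, 'ap) ctmc \<Rightarrow> bool" where
  "is_ctmc M \<longleftrightarrow>
     finite (states M) \<and> states M \<noteq> {} \<and>
     initial M \<in> states M \<and>
     (\<forall>s\<in>states M. (\<forall>t. prob M s t \<ge> 0) \<and> (\<forall>t. t \<notin> states M \<longrightarrow> prob M s t = 0)
                    \<and> (\<Sum>t\<in>states M. prob M s t) = 1) \<and>
     (\<forall>s\<in>states M. rate M s > 0)"

definition probset :: "('s, 'ap) ctmc \<Rightarrow> 's \<Rightarrow> 's set \<Rightarrow> real" where
  "probset M s A = (\<Sum>t\<in>A \<inter> states M. prob M s t)"

definition same_graph :: "('s, 'ap) ctmc \<Rightarrow> ('s, 'ap) ctmc \<Rightarrow> bool" where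
  "same_graph M N \<longleftrightarrow>
     states M = states N \<and> initial M = initial N \<and>
     (\<forall>s\<in>states M. label M s = label N s) \<and>
     (\<forall>s\<in>states M. \<forall>t\<in>states M. prob M s t > 0 \<longleftrightarrow> prob N s t > 0)"

definition eps_delta_bisim :: "real \<Rightarrow> real \<Rightarrow> ('s, 'ap) ctmc \<Rightarrow> ('s \<times> 's) set \<Rightarrow> bool" where
  "eps_delta_bisim \<epsilon> \<delta> M R \<longleftrightarrow>
     R \<subseteq> states M \<times> states M \<and> refl_on (states M) R \<and> sym R \<and>
     (\<forall>(s, s')\<in>R. label M s = label M s' \<and>
        \<bar>ln (rate M s) - ln (rate M s')\<bar> \<le> \<delta> \<and>
        (\<forall>A\<subseteq>states M. probset M s A \<le> probset M s' (R `` A) + \<epsilon>))"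

definition eps_delta_bisimilar :: "real \<Rightarrow> real \<Rightarrow> ('s, 'ap) ctmc \<Rightarrow> 's \<Rightarrow> 's \<Rightarrow> bool" where
  "eps_delta_bisimilar \<epsilon> \<delta> M s s' \<longleftrightarrow> (\<exists>R. eps_delta_bisim \<epsilon> \<delta> M R \<and> (s, s') \<in> R)"

definition strong_bisim :: "('s, 'ap) ctmc \<Rightarrow> ('s \<times> 's) set \<Rightarrow> bool" where
  "strong_bisim M R \<longleftrightarrow>
     equiv (states M) R \<and>
     (\<forall>(s, s')\<in>R. label M s = label M s' \<and> rate M s = rate M s' \<and>
        (\<forall>C\<in>states M // R. probset M s C = probset M s' C))"

definition strong_bisimilar :: "('s, 'ap) ctmc \<Rightarrow> 's \<Rightarrow> 's \<Rightarrow> bool" where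
  "strong_bisimilar M s s' \<longleftrightarrow> (\<exists>R. strong_bisim M R \<and> (s, s') \<in> R)"

text \<open>Direct sum (disjoint union); its initial state is irrelevant for the
  notions below, we take the initial state of the left summand.\<close>

definition direct_sum :: "('s, 'ap) ctmc \<Rightarrow> ('t, 'ap) ctmc \<Rightarrow> ('s + 't, 'ap) ctmc" where
  "direct_sum M N = \<lparr>
     states = Inl ` states M \<union> Inr ` states N,
     prob = (\<lambda>x y. case (x, y) of
                (Inl s, Inl s') \<Rightarrow> prob M s s'
              | (Inr t, Inr t') \<Rightarrow> prob N t t'
              | _ \<Rightarrow> 0),
     rate = case_sum (rate M) (rate N),
     initial = Inl (initial M),
     label = case_sum (label M) (label N) \<rparr>"

definition ctmc_eps_delta_bisimilar :: "real \<Rightarrow> real \<Rightarrow> ('s, 'ap) ctmc \<Rightarrow> ('t, 'ap) ctmc \<Rightarrow> bool" where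
  "ctmc_eps_delta_bisimilar \<epsilon> \<delta> M N \<longleftrightarrow>
     eps_delta_bisimilar \<epsilon> \<delta> (direct_sum M N) (Inl (initial M)) (Inr (initial N))"

definition ctmc_strong_bisimilar :: "('s, 'ap) ctmc \<Rightarrow> ('t, 'ap) ctmc \<Rightarrow> bool" where
  "ctmc_strong_bisimilar M N \<longleftrightarrow>
     strong_bisimilar (direct_sum M N) (Inl (initial M)) (Inr (initial N))"

end

(*
  Fix an (\<epsilon>,\<delta>)-bisimulation R on M \<oplus> N relating the initial states. Both intermediate
  chains live on the pairs (x, w) of a state x of M \<oplus> N and a state w of N with (x, w) in R,
  and move from (x, w) according to a coupling of the successor distributions of x and of w that
  is supported on R. The transfer condition P(w, A) \<le> P(x, R(A)) + \<epsilon> is an approximate Hall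
  condition, so the supply-demand (fractional Hall) theorem yields a coupling of mass at least
  1 - \<epsilon>; the remaining mass of each successor w' of w is put on the diagonal pair (w', w').
  M' reads rates and labels off the first component, N' off the second. Sharing their
  transitions, M' and N' have the same graph and are (0,\<delta>)-bisimilar; the second projection
  lumps N' exactly onto N; and the first projection changes probabilities by at most \<epsilon>, which
  makes M and M' (\<epsilon>,0)-bisimilar.
*)
theory Submission
  imports Defs
begin

section \<open>Fractional Hall theorem\<close>

definition nbhd :: "('x \<Rightarrow> 'y \<Rightarrow> bool) \<Rightarrow> 'x set \<Rightarrow> 'y set \<Rightarrow> 'x set" where
  "nbhd Rl X A = {x \<in> X. \<exists>y\<in>A. Rl x y}"

definition hall_condition ::
    "('x \<Rightarrow> 'y \<Rightarrow> bool) \<Rightarrow> 'x set \<Rightarrow> 'y set \<Rightarrow> ('x \<Rightarrow> real) \<Rightarrow> ('y \<Rightarrow> real) \<Rightarrow> bool" where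
  "hall_condition Rl X Y p q \<longleftrightarrow> (\<forall>A\<subseteq>Y. sum q A \<le> sum p (nbhd Rl X A))"

definition transport :: "('x \<Rightarrow> 'y \<Rightarrow> bool) \<Rightarrow> 'x set \<Rightarrow> 'y set \<Rightarrow> ('x \<Rightarrow> real) \<Rightarrow> ('y \<Rightarrow> real) \<Rightarrow>
    ('x \<Rightarrow> 'y \<Rightarrow> real) \<Rightarrow> bool" where
  "transport Rl X Y p q f \<longleftrightarrow>
     (\<forall>x y. 0 \<le> f x y) \<and> (\<forall>x y. f x y \<noteq> 0 \<longrightarrow> x \<in> X \<and> y \<in> Y \<and> Rl x y) \<and>
     (\<forall>x\<in>X. sum (f x) Y \<le> p x) \<and> (\<forall>y\<in>Y. (\<Sum>x\<in>X. f x y) \<le> q y)"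

definition saturating_transport :: "('x \<Rightarrow> 'y \<Rightarrow> bool) \<Rightarrow> 'x set \<Rightarrow> 'y set \<Rightarrow> ('x \<Rightarrow> real) \<Rightarrow>
    ('y \<Rightarrow> real) \<Rightarrow> ('x \<Rightarrow> 'y \<Rightarrow> real) \<Rightarrow> bool" where
  "saturating_transport Rl X Y p q f \<longleftrightarrow> transport Rl X Y p q f \<and> (\<forall>y\<in>Y. (\<Sum>x\<in>X. f x y) = q y)"

definition hall_reducible ::
    "('x \<Rightarrow> 'y \<Rightarrow> bool) \<Rightarrow> 'x set \<Rightarrow> 'y set \<Rightarrow> ('x \<Rightarrow> real) \<Rightarrow> ('y \<Rightarrow> real) \<Rightarrow> bool" where
  "hall_reducible Rl X Y p q \<longleftrightarrow> (\<exists>x\<in>X. p x = 0) \<or> (\<exists>y\<in>Y. q y = 0) \<or>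
     (\<exists>A\<subseteq>Y. A \<noteq> {} \<and> A \<noteq> Y \<and> sum q A = sum p (nbhd Rl X A))"

lemma sum_fun_upd_diff:
  fixes g :: "'a \<Rightarrow> real"
  assumes "finite S"
  shows "sum (g(a := g a - t)) S = sum g S - (if a \<in> S then t else 0)"
proof (cases "a \<in> S")
  case True
  then show ?thesis using assms by (simp add: sum.remove[of S a])
next
  case False
  then have "sum (g(a := g a - t)) S = sum g S" by (intro sum.cong) auto
  then show ?thesis using False by simp
qed

lemma nbhd_subset: "nbhd Rl X A \<subseteq> X"
  by (auto simp: nbhd_def)

lemma hall_condition_subset:
  "hall_condition Rl X Y p q \<Longrightarrow> Y' \<subseteq> Y \<Longrightarrow> hall_condition Rl X Y' p q"
  unfolding hall_condition_def by blast

lemma hall_condition_remove_null_supply: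
  assumes "finite X" "p x0 = 0" "hall_condition Rl X Y p q"
  shows "hall_condition Rl (X - {x0}) Y p q"
  unfolding hall_condition_def
proof (intro allI impI)
  fix A assume "A \<subseteq> Y"
  have "sum p (nbhd Rl (X - {x0}) A) = sum p (nbhd Rl X A)"
    by (rule sum.mono_neutral_left) (use assms in \<open>auto simp: nbhd_def\<close>)
  then show "sum q A \<le> sum p (nbhd Rl (X - {x0}) A)"
    using assms(3) \<open>A \<subseteq> Y\<close> unfolding hall_condition_def by simp
qed

lemma hall_condition_nbhd:
  assumes "hall_condition Rl X Y p q" "A \<subseteq> Y"
  shows "hall_condition Rl (nbhd Rl X A) A p q"
proof -
  have "nbhd Rl (nbhd Rl X A) B = nbhd Rl X B" if "B \<subseteq> A" for B
    using that by (auto simp: nbhd_def)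
  then show ?thesis using assms unfolding hall_condition_def by auto
qed

lemma hall_condition_tight_complement:
  assumes "finite X" "finite Y" "hall_condition Rl X Y p q" "A \<subseteq> Y"
    and tight: "sum q A = sum p (nbhd Rl X A)"
  shows "hall_condition Rl (X - nbhd Rl X A) (Y - A) p q"
  unfolding hall_condition_def
proof (intro allI impI)
  fix B assume B: "B \<subseteq> Y - A"
  have fin: "finite A" "finite B" using assms B finite_subset by blast+
  have "sum q A + sum q B = sum q (A \<union> B)"
    using B fin by (intro sum.union_disjoint[symmetric]) auto
  also have "\<dots> \<le> sum p (nbhd Rl X (A \<union> B))"
    using assms(3,4) B unfolding hall_condition_def by (metis Diff_subset le_sup_iff order_trans)
  also have "nbhd Rl X (A \<union> B) = nbhd Rl X A \<union> nbhd Rl (X - nbhd Rl X A) B"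
    by (auto simp: nbhd_def)
  also have "sum p \<dots> = sum p (nbhd Rl X A) + sum p (nbhd Rl (X - nbhd Rl X A) B)"
    using assms(1) by (intro sum.union_disjoint) (auto simp: nbhd_def)
  finally show "sum q B \<le> sum p (nbhd Rl (X - nbhd Rl X A) B)"
    using tight by simp
qed

lemma hall_condition_shift:
  assumes fin: "finite X" "finite Y" and hall: "hall_condition Rl X Y p q"
    and edge: "x0 \<in> X" "Rl x0 y0"
    and slack: "\<And>A. A \<subseteq> Y \<Longrightarrow> y0 \<notin> A \<Longrightarrow> x0 \<in> nbhd Rl X A \<Longrightarrow>
      t \<le> sum p (nbhd Rl X A) - sum q A"
  shows "hall_condition Rl X Y (p(x0 := p x0 - t)) (q(y0 := q y0 - t))"
  unfolding hall_condition_def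
proof (intro allI impI)
  fix A assume A: "A \<subseteq> Y"
  have q': "sum (q(y0 := q y0 - t)) A = sum q A - (if y0 \<in> A then t else 0)"
    using finite_subset[OF A fin(2)] by (rule sum_fun_upd_diff)
  have p': "sum (p(x0 := p x0 - t)) (nbhd Rl X A) =
      sum p (nbhd Rl X A) - (if x0 \<in> nbhd Rl X A then t else 0)"
    using finite_subset[OF nbhd_subset fin(1)] by (rule sum_fun_upd_diff)
  have "sum q A \<le> sum p (nbhd Rl X A)" using hall A unfolding hall_condition_def by blast
  moreover have "y0 \<in> A \<Longrightarrow> x0 \<in> nbhd Rl X A" using edge by (auto simp: nbhd_def)
  moreover note slack[OF A]
  ultimately show "sum (q(y0 := q y0 - t)) A \<le> sum (p(x0 := p x0 - t)) (nbhd Rl X A)"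
    unfolding q' p' by (smt (verit))
qed

lemma hall_condition_shift_exists:
  assumes fin: "finite X" "finite Y" and nonneg: "\<forall>x\<in>X. 0 \<le> p x" "\<forall>y\<in>Y. 0 \<le> q y"
    and hall: "hall_condition Rl X Y p q" and edge: "x0 \<in> X" "y0 \<in> Y" "Rl x0 y0"
  obtains t where "0 \<le> t" "t \<le> p x0" "t \<le> q y0"
    "hall_condition Rl X Y (p(x0 := p x0 - t)) (q(y0 := q y0 - t))"
    "hall_reducible Rl X Y (p(x0 := p x0 - t)) (q(y0 := q y0 - t))"
proof -
  define slack where "slack A = sum p (nbhd Rl X A) - sum q A" for A
  define \<A> where "\<A> = {A. A \<subseteq> Y \<and> y0 \<notin> A \<and> x0 \<in> nbhd Rl X A}"
  define S where "S = {p x0, q y0} \<union> slack ` \<A>"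
  define t where "t = Min S"
  have "\<A> \<subseteq> Pow Y" unfolding \<A>_def by blast
  then have "finite S" unfolding S_def using finite_subset[of \<A> "Pow Y"] fin(2) by simp
  then have t_le: "t \<le> s" if "s \<in> S" for s
    unfolding t_def using that by (rule Min_le)
  have t_in: "t \<in> S"
    unfolding t_def using \<open>finite S\<close> by (rule Min_in) (simp add: S_def)
  have "0 \<le> slack A" if "A \<in> \<A>" for A
    using hall that unfolding hall_condition_def slack_def \<A>_def by simp
  then have "0 \<le> t" using t_in nonneg edge unfolding S_def by auto
  moreover have "t \<le> p x0" "t \<le> q y0" using t_le by (simp_all add: S_def)
  moreover have "hall_condition Rl X Y (p(x0 := p x0 - t)) (q(y0 := q y0 - t))"
  proof (rule hall_condition_shift[OF fin hall edge(1,3)])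
    fix A assume "A \<subseteq> Y" "y0 \<notin> A" "x0 \<in> nbhd Rl X A"
    then have "slack A \<in> S" unfolding S_def \<A>_def by blast
    then show "t \<le> sum p (nbhd Rl X A) - sum q A" using t_le unfolding slack_def by blast
  qed
  moreover have "hall_reducible Rl X Y (p(x0 := p x0 - t)) (q(y0 := q y0 - t))"
  proof -
    consider "t = p x0" | "t = q y0" | A where "A \<in> \<A>" "t = slack A"
      using t_in unfolding S_def by blast
    then show ?thesis
    proof cases
      case (3 A)
      then have A: "A \<subseteq> Y" "y0 \<notin> A" "x0 \<in> nbhd Rl X A" unfolding \<A>_def by simp_all
      have "sum (q(y0 := q y0 - t)) A = sum q A"
        using sum_fun_upd_diff[OF finite_subset[OF A(1) fin(2)], of q y0 t] A(2) by simp
      also have "\<dots> = sum (p(x0 := p x0 - t)) (nbhd Rl X A)"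
        using sum_fun_upd_diff[OF finite_subset[OF nbhd_subset[of Rl X A] fin(1)], of p x0 t] A(3)
        by (simp add: 3 slack_def)
      finally have "sum (q(y0 := q y0 - t)) A = sum (p(x0 := p x0 - t)) (nbhd Rl X A)" .
      moreover have "A \<noteq> {}" "A \<noteq> Y" using A edge(2) by (auto simp: nbhd_def)
      ultimately show ?thesis using A(1) unfolding hall_reducible_def by blast
    qed (use edge in \<open>auto simp: hall_reducible_def\<close>)
  qed
  ultimately show thesis using that by blast
qed

lemma saturating_transport_enlarge:
  assumes fin: "finite X'" "finite Y'" and sub: "X \<subseteq> X'" "Y \<subseteq> Y'"
    and p: "\<forall>x\<in>X' - X. 0 \<le> p x" and q: "\<forall>y\<in>Y' - Y. q y = 0"
    and f: "saturating_transport Rl X Y p q f"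
  shows "saturating_transport Rl X' Y' p q f"
proof -
  have supp: "f x y \<noteq> 0 \<Longrightarrow> x \<in> X \<and> y \<in> Y \<and> Rl x y" for x y
    using f unfolding saturating_transport_def transport_def by blast
  have row: "sum (f x) Y' = (if x \<in> X then sum (f x) Y else 0)" for x
  proof -
    have "sum (f x) Y' = sum (f x) Y"
      using fin sub supp by (intro sum.mono_neutral_right) auto
    moreover have "x \<notin> X \<Longrightarrow> sum (f x) Y = 0"
      using supp by (intro sum.neutral) blast
    ultimately show ?thesis by simp
  qed
  have col: "(\<Sum>x\<in>X'. f x y) = (if y \<in> Y then \<Sum>x\<in>X. f x y else 0)" for y
  proof -
    have "(\<Sum>x\<in>X'. f x y) = (\<Sum>x\<in>X. f x y)"
      using fin sub supp by (intro sum.mono_neutral_right) auto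
    moreover have "y \<notin> Y \<Longrightarrow> (\<Sum>x\<in>X. f x y) = 0"
      using supp by (intro sum.neutral) blast
    ultimately show ?thesis by simp
  qed
  show ?thesis
    using f p q sub supp unfolding saturating_transport_def transport_def row col by auto
qed

lemma saturating_transport_union:
  assumes fin: "finite X" "finite Y" and A: "A \<subseteq> Y"
    and f: "saturating_transport Rl (nbhd Rl X A) A p q f"
    and g: "saturating_transport Rl (X - nbhd Rl X A) (Y - A) p q g"
  shows "saturating_transport Rl X Y p q (\<lambda>x y. f x y + g x y)"
proof -
  let ?N = "nbhd Rl X A"
  have f0: "f x y \<noteq> 0 \<Longrightarrow> x \<in> ?N \<and> y \<in> A \<and> Rl x y"
    and g0: "g x y \<noteq> 0 \<Longrightarrow> x \<in> X - ?N \<and> y \<in> Y - A \<and> Rl x y" for x y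
    using f g unfolding saturating_transport_def transport_def by blast+
  have "?N \<subseteq> X" by (rule nbhd_subset)
  have row: "sum (\<lambda>y. f x y + g x y) Y = (if x \<in> ?N then sum (f x) A else sum (g x) (Y - A))" for x
  proof -
    have "sum (f x) Y = sum (f x) A" "sum (g x) Y = sum (g x) (Y - A)"
      using fin A f0 g0 by (auto intro!: sum.mono_neutral_right)
    moreover have "x \<notin> ?N \<Longrightarrow> sum (f x) A = 0" "x \<in> ?N \<Longrightarrow> sum (g x) (Y - A) = 0"
      using f0 g0 by (auto intro!: sum.neutral)
    ultimately show ?thesis by (simp add: sum.distrib)
  qed
  have col: "(\<Sum>x\<in>X. f x y + g x y) = (if y \<in> A then \<Sum>x\<in>?N. f x y else \<Sum>x\<in>X - ?N. g x y)" for y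
  proof -
    have "(\<Sum>x\<in>X. f x y) = (\<Sum>x\<in>?N. f x y)" "(\<Sum>x\<in>X. g x y) = (\<Sum>x\<in>X - ?N. g x y)"
      using fin \<open>?N \<subseteq> X\<close> f0 g0 by (auto intro!: sum.mono_neutral_right)
    moreover have "y \<notin> A \<Longrightarrow> (\<Sum>x\<in>?N. f x y) = 0" "y \<in> A \<Longrightarrow> (\<Sum>x\<in>X - ?N. g x y) = 0"
      using f0 g0 by (auto intro!: sum.neutral)
    ultimately show ?thesis by (simp add: sum.distrib)
  qed
  have "f x y + g x y \<noteq> 0 \<Longrightarrow> x \<in> X \<and> y \<in> Y \<and> Rl x y" for x y
    using f0[of x y] g0[of x y] A \<open>?N \<subseteq> X\<close> by (cases "f x y = 0") auto
  then show ?thesis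
    using f g A unfolding saturating_transport_def transport_def row col
    by (auto simp: add_nonneg_nonneg)
qed

lemma saturating_transport_add_edge:
  assumes fin: "finite X" "finite Y" and edge: "x0 \<in> X" "y0 \<in> Y" "Rl x0 y0" and "0 \<le> t"
    and f: "saturating_transport Rl X Y (p(x0 := p x0 - t)) (q(y0 := q y0 - t)) f"
  shows "saturating_transport Rl X Y p q (\<lambda>x y. f x y + (if x = x0 \<and> y = y0 then t else 0))"
proof -
  have row: "(\<Sum>y\<in>Y. f x y + (if x = x0 \<and> y = y0 then t else 0)) =
      sum (f x) Y + (if x = x0 then t else 0)" for x
    using fin(2) edge(2) by (simp add: sum.distrib)
  have col: "(\<Sum>x\<in>X. f x y + (if x = x0 \<and> y = y0 then t else 0)) =
      (\<Sum>x\<in>X. f x y) + (if y = y0 then t else 0)" for y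
    using fin(1) edge(1) by (simp add: sum.distrib)
  show ?thesis
    using f edge \<open>0 \<le> t\<close> unfolding saturating_transport_def transport_def row col
    by (auto split: if_splits)
qed

lemma saturating_transport_reduction:
  assumes fin: "finite X" "finite Y" and nonneg: "\<forall>x\<in>X. 0 \<le> p x" "\<forall>y\<in>Y. 0 \<le> q y"
    and hall: "hall_condition Rl X Y p q"
    and smaller: "\<And>X' Y'. X' \<subseteq> X \<Longrightarrow> Y' \<subseteq> Y \<Longrightarrow> card X' + card Y' < card X + card Y \<Longrightarrow>
      hall_condition Rl X' Y' p q \<Longrightarrow> \<exists>f. saturating_transport Rl X' Y' p q f"
    and "hall_reducible Rl X Y p q"
  shows "\<exists>f. saturating_transport Rl X Y p q f"
  using \<open>hall_reducible Rl X Y p q\<close> unfolding hall_reducible_def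
proof (elim disjE bexE exE conjE)
  fix x0 assume x0: "x0 \<in> X" "p x0 = 0"
  have "card (X - {x0}) + card Y < card X + card Y"
    using card_Diff1_less[OF fin(1) x0(1)] by simp
  then obtain f where f: "saturating_transport Rl (X - {x0}) Y p q f"
    using smaller[OF Diff_subset order_refl] hall_condition_remove_null_supply[OF fin(1) x0(2) hall]
    by blast
  show ?thesis
    by (rule exI, rule saturating_transport_enlarge[OF fin _ _ _ _ f]) (use x0 in auto)
next
  fix y0 assume y0: "y0 \<in> Y" "q y0 = 0"
  have "card X + card (Y - {y0}) < card X + card Y"
    using card_Diff1_less[OF fin(2) y0(1)] by simp
  then obtain f where f: "saturating_transport Rl X (Y - {y0}) p q f"
    using smaller[OF order_refl Diff_subset] hall_condition_subset[OF hall Diff_subset] by blast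
  show ?thesis
    by (rule exI, rule saturating_transport_enlarge[OF fin _ _ _ _ f]) (use y0 in auto)
next
  fix A assume A: "A \<subseteq> Y" "A \<noteq> {}" "A \<noteq> Y" and tight: "sum q A = sum p (nbhd Rl X A)"
  have "card (nbhd Rl X A) \<le> card X" "card (X - nbhd Rl X A) \<le> card X"
    using card_mono[OF fin(1) nbhd_subset] card_mono[OF fin(1) Diff_subset] by blast+
  moreover have "card A < card Y" "card (Y - A) < card Y"
    using fin(2) A by (auto intro: psubset_card_mono)
  ultimately have "card (nbhd Rl X A) + card A < card X + card Y"
    "card (X - nbhd Rl X A) + card (Y - A) < card X + card Y" by linarith+
  then obtain f g where
      "saturating_transport Rl (nbhd Rl X A) A p q f"
      "saturating_transport Rl (X - nbhd Rl X A) (Y - A) p q g"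
    using smaller[OF nbhd_subset A(1) _ hall_condition_nbhd[OF hall A(1)]]
      smaller[OF Diff_subset Diff_subset _ hall_condition_tight_complement[OF fin hall A(1) tight]]
    by blast
  then show ?thesis using saturating_transport_union[OF fin A(1)] by blast
qed

lemma saturating_transport_no_edges:
  assumes "\<not> (\<exists>x\<in>X. \<exists>y\<in>Y. Rl x y)" "\<forall>x\<in>X. 0 \<le> p x" "\<forall>y\<in>Y. 0 \<le> q y"
    and hall: "hall_condition Rl X Y p q"
  shows "saturating_transport Rl X Y p q (\<lambda>_ _. 0)"
proof -
  have "q y = 0" if "y \<in> Y" for y
  proof -
    have "sum q {y} \<le> sum p (nbhd Rl X {y})" using hall that unfolding hall_condition_def by blast
    moreover have "nbhd Rl X {y} = {}" using assms(1) that by (auto simp: nbhd_def)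
    ultimately show ?thesis using assms(3) that by fastforce
  qed
  then show ?thesis using assms(2) unfolding saturating_transport_def transport_def by simp
qed

text \<open>Induction on \<open>card X + card Y\<close>: push as much mass along one edge as Hall's condition
  allows; afterwards a supply or a demand is exhausted, or a proper tight set splits the instance
  into two smaller ones.\<close>

theorem saturating_transport_exists:
  assumes "finite X" "finite Y" "\<forall>x\<in>X. 0 \<le> p x" "\<forall>y\<in>Y. 0 \<le> q y" "hall_condition Rl X Y p q"
  shows "\<exists>f. saturating_transport Rl X Y p q f"
  using assms
proof (induction "card X + card Y" arbitrary: X Y p q rule: less_induct)
  case less
  note fin = less.prems(1,2) and nonneg = less.prems(3,4) and hall = less.prems(5)
  show ?case
  proof (cases "\<exists>x0\<in>X. \<exists>y0\<in>Y. Rl x0 y0")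
    case False
    then have "saturating_transport Rl X Y p q (\<lambda>_ _. 0)"
      using nonneg hall by (rule saturating_transport_no_edges)
    then show ?thesis by blast
  next
    case True
    then obtain x0 y0 where edge: "x0 \<in> X" "y0 \<in> Y" "Rl x0 y0" by blast
    obtain t where t: "0 \<le> t" "t \<le> p x0" "t \<le> q y0"
      and hall': "hall_condition Rl X Y (p(x0 := p x0 - t)) (q(y0 := q y0 - t))"
      and reducible: "hall_reducible Rl X Y (p(x0 := p x0 - t)) (q(y0 := q y0 - t))"
      using hall_condition_shift_exists[OF fin nonneg hall edge] by blast
    have "\<exists>f'. saturating_transport Rl X Y (p(x0 := p x0 - t)) (q(y0 := q y0 - t)) f'"
    proof (rule saturating_transport_reduction[OF fin _ _ hall' _ reducible])
      show "\<forall>x\<in>X. 0 \<le> (p(x0 := p x0 - t)) x" "\<forall>y\<in>Y. 0 \<le> (q(y0 := q y0 - t)) y"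
        using nonneg t by simp_all
      then show "\<exists>f. saturating_transport Rl X' Y' (p(x0 := p x0 - t)) (q(y0 := q y0 - t)) f"
        if "X' \<subseteq> X" "Y' \<subseteq> Y" "card X' + card Y' < card X + card Y"
          "hall_condition Rl X' Y' (p(x0 := p x0 - t)) (q(y0 := q y0 - t))" for X' Y'
        using less.hyps[OF that(3) finite_subset[OF that(1) fin(1)]
            finite_subset[OF that(2) fin(2)]] that
        by blast
    qed
    then obtain f' where "saturating_transport Rl X Y (p(x0 := p x0 - t)) (q(y0 := q y0 - t)) f'" ..
    from saturating_transport_add_edge[OF fin edge t(1) this] show ?thesis by blast
  qed
qed

lemma hall_condition_extra_supply:
  assumes "finite X" and approx_hall: "\<And>A. A \<subseteq> Y \<Longrightarrow> sum q A \<le> sum p (nbhd Rl X A) + e"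
  shows "hall_condition (case_option (\<lambda>_. True) Rl) (insert None (Some ` X)) Y (case_option e p) q"
  unfolding hall_condition_def
proof (intro allI impI)
  fix A assume A: "A \<subseteq> Y"
  show "sum q A \<le>
      sum (case_option e p) (nbhd (case_option (\<lambda>_. True) Rl) (insert None (Some ` X)) A)"
  proof (cases "A = {}")
    case False
    then have "nbhd (case_option (\<lambda>_. True) Rl) (insert None (Some ` X)) A =
        insert None (Some ` nbhd Rl X A)"
    proof (intro equalityI subsetI)
      fix x assume "x \<in> nbhd (case_option (\<lambda>_. True) Rl) (insert None (Some ` X)) A"
      then show "x \<in> insert None (Some ` nbhd Rl X A)" by (cases x) (auto simp: nbhd_def)
    qed (use False in \<open>auto simp: nbhd_def\<close>)
    then show ?thesis
      using approx_hall[OF A] finite_subset[OF nbhd_subset[of Rl X A] assms(1)]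
      by (simp add: sum.reindex)
  qed (simp add: nbhd_def)
qed

theorem transport_exists_approx_hall:
  assumes fin: "finite X" "finite Y" and nonneg: "\<forall>x\<in>X. 0 \<le> p x" "\<forall>y\<in>Y. 0 \<le> q y"
    and "0 \<le> e" and approx_hall: "\<And>A. A \<subseteq> Y \<Longrightarrow> sum q A \<le> sum p (nbhd Rl X A) + e"
  shows "\<exists>f. transport Rl X Y p q f \<and> sum q Y - e \<le> (\<Sum>x\<in>X. sum (f x) Y)"
proof -
  define X' where "X' = insert None (Some ` X)"
  define p' where "p' = case_option e p"
  define Rl' where "Rl' = case_option (\<lambda>_. True) Rl"
  have "hall_condition Rl' X' Y p' q"
    unfolding X'_def p'_def Rl'_def using fin(1) approx_hall by (rule hall_condition_extra_supply)
  moreover have "finite X'" "\<forall>x\<in>X'. 0 \<le> p' x"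
    using fin(1) nonneg(1) \<open>0 \<le> e\<close> unfolding X'_def p'_def by auto
  ultimately obtain f' where f': "saturating_transport Rl' X' Y p' q f'"
    using saturating_transport_exists fin(2) nonneg(2) by blast
  define f where "f x y = f' (Some x) y" for x y
  have col: "(\<Sum>x\<in>X'. f' x y) = f' None y + (\<Sum>x\<in>X. f x y)" for y
    unfolding X'_def f_def using fin(1) by (simp add: sum.reindex)
  have "(\<Sum>x\<in>X. sum (f x) Y) = (\<Sum>y\<in>Y. \<Sum>x\<in>X. f x y)" by (rule sum.swap)
  also have "\<dots> = (\<Sum>y\<in>Y. q y - f' None y)"
    using f' col unfolding saturating_transport_def by (intro sum.cong) (auto simp: algebra_simps)
  also have "\<dots> = sum q Y - sum (f' None) Y" by (rule sum_subtractf)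
  finally have "sum q Y - e \<le> (\<Sum>x\<in>X. sum (f x) Y)"
    using f' unfolding saturating_transport_def transport_def X'_def p'_def by simp
  moreover have "transport Rl X Y p q f"
  proof -
    have f'_nonneg: "0 \<le> f' x y" and f'_supp: "f' x y \<noteq> 0 \<Longrightarrow> x \<in> X' \<and> y \<in> Y \<and> Rl' x y"
      and f'_rows: "x \<in> X' \<Longrightarrow> sum (f' x) Y \<le> p' x"
      and f'_cols: "y \<in> Y \<Longrightarrow> (\<Sum>x\<in>X'. f' x y) = q y" for x y
      using f' unfolding saturating_transport_def transport_def by blast+
    have "f x y \<noteq> 0 \<Longrightarrow> x \<in> X \<and> y \<in> Y \<and> Rl x y" for x y
      using f'_supp[of "Some x" y] unfolding f_def X'_def Rl'_def by auto
    moreover have "x \<in> X \<Longrightarrow> sum (f x) Y \<le> p x" for x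
      using f'_rows[of "Some x"] unfolding f_def X'_def p'_def by simp
    moreover have "y \<in> Y \<Longrightarrow> (\<Sum>x\<in>X. f x y) \<le> q y" for y
      using f'_cols[of y] col[of y] f'_nonneg[of None y] by simp
    ultimately show ?thesis unfolding transport_def f_def using f'_nonneg by blast
  qed
  ultimately show ?thesis by blast
qed

section \<open>Direct sums and bisimulations\<close>

lemma states_direct_sum: "states (direct_sum M N) = Inl ` states M \<union> Inr ` states N"
  by (simp add: direct_sum_def)

lemma direct_sum_simps [simp]:
  "prob (direct_sum M N) (Inl s) (Inl s') = prob M s s'"
  "prob (direct_sum M N) (Inr t) (Inr t') = prob N t t'"
  "prob (direct_sum M N) (Inl s) (Inr t) = 0"
  "prob (direct_sum M N) (Inr t) (Inl s) = 0"
  "rate (direct_sum M N) (Inl s) = rate M s"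
  "rate (direct_sum M N) (Inr t) = rate N t"
  "label (direct_sum M N) (Inl s) = label M s"
  "label (direct_sum M N) (Inr t) = label N t"
  "initial (direct_sum M N) = Inl (initial M)"
  by (simp_all add: direct_sum_def)

lemma sum_states_direct_sum:
  assumes "finite (states M)" "finite (states N)"
  shows "(\<Sum>t\<in>A \<inter> states (direct_sum M N). g t) =
    (\<Sum>s\<in>Inl -` A \<inter> states M. g (Inl s)) + (\<Sum>s\<in>Inr -` A \<inter> states N. g (Inr s))"
proof -
  have "A \<inter> states (direct_sum M N) = Inl ` (Inl -` A \<inter> states M) \<union> Inr ` (Inr -` A \<inter> states N)"
    by (auto simp: states_direct_sum)
  also have "sum g \<dots> = sum g (Inl ` (Inl -` A \<inter> states M)) + sum g (Inr ` (Inr -` A \<inter> states N))"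
    using assms by (intro sum.union_disjoint) auto
  finally show ?thesis by (simp add: sum.reindex)
qed

lemma probset_direct_sum_Inl:
  "finite (states M) \<Longrightarrow> finite (states N) \<Longrightarrow>
    probset (direct_sum M N) (Inl s) A = probset M s (Inl -` A)"
  unfolding probset_def by (subst sum_states_direct_sum) (simp_all add: states_direct_sum)

lemma probset_direct_sum_Inr:
  "finite (states M) \<Longrightarrow> finite (states N) \<Longrightarrow>
    probset (direct_sum M N) (Inr s) A = probset N s (Inr -` A)"
  unfolding probset_def by (subst sum_states_direct_sum) (simp_all add: states_direct_sum)

lemma is_ctmc_direct_sum:
  assumes M: "is_ctmc M" and N: "is_ctmc N"
  shows "is_ctmc (direct_sum M N)"
proof -
  have fin: "finite (states M)" "finite (states N)" using M N unfolding is_ctmc_def by auto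
  have "probset M s UNIV = 1" if "s \<in> states M" for s
    using M that unfolding is_ctmc_def probset_def by simp
  moreover have "probset N s UNIV = 1" if "s \<in> states N" for s
    using N that unfolding is_ctmc_def probset_def by simp
  ultimately have "probset (direct_sum M N) s UNIV = 1" if "s \<in> states (direct_sum M N)" for s
    using that
    by (auto simp: states_direct_sum probset_direct_sum_Inl[OF fin] probset_direct_sum_Inr[OF fin])
  moreover have "0 \<le> prob (direct_sum M N) s t" "rate (direct_sum M N) s > 0"
    if "s \<in> states (direct_sum M N)" for s t
    using that M N unfolding is_ctmc_def by (cases s; cases t; auto simp: states_direct_sum)+
  moreover have "prob (direct_sum M N) s t = 0"
    if "s \<in> states (direct_sum M N)" "t \<notin> states (direct_sum M N)" for s t
    using that M N unfolding is_ctmc_def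
    by (cases s; cases t; auto simp: states_direct_sum image_iff)
  ultimately show ?thesis
    using M fin unfolding is_ctmc_def probset_def by (auto simp: states_direct_sum)
qed

lemma probset_mono:
  assumes "is_ctmc X" "s \<in> states X" "A \<inter> states X \<subseteq> B"
  shows "probset X s A \<le> probset X s B"
  using assms unfolding probset_def is_ctmc_def by (intro sum_mono2) auto

lemma eps_delta_bisimD:
  assumes "eps_delta_bisim e d X R" "(a, b) \<in> R"
  shows "a \<in> states X" "b \<in> states X" "(b, a) \<in> R" "label X a = label X b"
    "\<bar>ln (rate X a) - ln (rate X b)\<bar> \<le> d"
    "\<And>A. A \<subseteq> states X \<Longrightarrow> probset X a A \<le> probset X b (R `` A) + e"
  using assms unfolding eps_delta_bisim_def sym_def by auto

lemma eps_delta_bisimilar_generated: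
  fixes X :: "('a, 'ap) ctmc" and L :: "'a rel"
  defines "Q \<equiv> Id_on (states X) \<union> L \<union> L\<inverse>"
  assumes X: "is_ctmc X" and "0 \<le> e" "0 \<le> d" and L: "L \<subseteq> states X \<times> states X"
    and label: "\<And>a b. (a, b) \<in> L \<Longrightarrow> label X a = label X b"
    and rate: "\<And>a b. (a, b) \<in> L \<Longrightarrow> \<bar>ln (rate X a) - ln (rate X b)\<bar> \<le> d"
    and prob: "\<And>a b A. (a, b) \<in> L \<union> L\<inverse> \<Longrightarrow> A \<subseteq> states X \<Longrightarrow>
      probset X a A \<le> probset X b (Q `` A) + e"
    and "(s, s') \<in> L"
  shows "eps_delta_bisimilar e d X s s'"
proof -
  have "A \<inter> states X \<subseteq> Q `` A" for A unfolding Q_def by blast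
  then have self: "probset X a A \<le> probset X a (Q `` A) + e" if "a \<in> states X" for a A
    using probset_mono[OF X that] \<open>0 \<le> e\<close> by (smt (verit))
  have "label X a = label X b \<and> \<bar>ln (rate X a) - ln (rate X b)\<bar> \<le> d \<and>
      (\<forall>A\<subseteq>states X. probset X a A \<le> probset X b (Q `` A) + e)" if "(a, b) \<in> Q" for a b
  proof (cases "(a, b) \<in> L \<union> L\<inverse>")
    case True
    then have "label X a = label X b" "\<bar>ln (rate X a) - ln (rate X b)\<bar> \<le> d"
      using label rate[of a b] rate[of b a] by (auto simp: abs_minus_commute)
    then show ?thesis using prob[OF True] by blast
  next
    case False
    then have "a = b" "a \<in> states X" using that unfolding Q_def by auto
    then show ?thesis using \<open>0 \<le> d\<close> self by simp
  qed
  moreover have "Q \<subseteq> states X \<times> states X" "refl_on (states X) Q" "sym Q"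
    using L unfolding Q_def refl_on_def sym_def by auto
  ultimately have "eps_delta_bisim e d X Q" unfolding eps_delta_bisim_def by blast
  then show ?thesis unfolding eps_delta_bisimilar_def Q_def using \<open>(s, s') \<in> L\<close> by blast
qed

lemma ctmc_eps_delta_bisimilar_perturb_rates:
  fixes X Y :: "('a, 'ap) ctmc"
  assumes X: "is_ctmc X" and Y: "is_ctmc Y" and same: "states Y = states X" "prob Y = prob X"
    "initial Y = initial X"
    and label: "\<And>s. s \<in> states X \<Longrightarrow> label Y s = label X s"
    and rate: "\<And>s. s \<in> states X \<Longrightarrow> \<bar>ln (rate X s) - ln (rate Y s)\<bar> \<le> d" and "0 \<le> d"
  shows "ctmc_eps_delta_bisimilar 0 d X Y"
proof -
  let ?Z = "direct_sum X Y"
  define L :: "('a + 'a) rel" where "L = {(Inl s, Inr s) | s. s \<in> states X}"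
  have fin: "finite (states X)" "finite (states Y)" using X Y unfolding is_ctmc_def by auto
  have prob: "probset ?Z a A \<le> probset ?Z b ((Id_on (states ?Z) \<union> L \<union> L\<inverse>) `` A) + 0"
    if ab: "(a, b) \<in> L \<union> L\<inverse>" for a b A
  proof -
    obtain s where s: "s \<in> states X" "(a, b) = (Inl s, Inr s) \<or> (a, b) = (Inr s, Inl s)"
      using ab unfolding L_def by blast
    let ?QA = "(Id_on (states ?Z) \<union> L \<union> L\<inverse>) `` A"
    have "probset Y = probset X" unfolding probset_def[abs_def] using same by simp
    moreover have "Inl -` A \<inter> states X \<subseteq> Inr -` ?QA" "Inr -` A \<inter> states X \<subseteq> Inl -` ?QA"
      unfolding L_def by (auto simp: states_direct_sum)
    ultimately show ?thesis
      using s probset_mono[OF X s(1)]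
      by (auto simp: probset_direct_sum_Inl[OF fin] probset_direct_sum_Inr[OF fin])
  qed
  have "eps_delta_bisimilar 0 d ?Z (Inl (initial X)) (Inr (initial Y))"
  proof (rule eps_delta_bisimilar_generated[OF is_ctmc_direct_sum[OF X Y] order_refl \<open>0 \<le> d\<close>])
    show "L \<subseteq> states ?Z \<times> states ?Z" using same unfolding L_def by (auto simp: states_direct_sum)
    show "label ?Z a = label ?Z b" "\<bar>ln (rate ?Z a) - ln (rate ?Z b)\<bar> \<le> d" if "(a, b) \<in> L" for a b
      using that label rate unfolding L_def by auto
    show "(Inl (initial X), Inr (initial Y)) \<in> L" using X same unfolding L_def is_ctmc_def by auto
  qed (rule prob)
  then show ?thesis unfolding ctmc_eps_delta_bisimilar_def .
qed

lemma ctmc_strong_bisimilar_lumping: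
  assumes X: "is_ctmc X" and Y: "is_ctmc Y" and \<pi>: "\<pi> ` states X \<subseteq> states Y"
    and initial: "\<pi> (initial X) = initial Y"
    and label: "\<And>s. s \<in> states X \<Longrightarrow> label X s = label Y (\<pi> s)"
    and rate: "\<And>s. s \<in> states X \<Longrightarrow> rate X s = rate Y (\<pi> s)"
    and lump: "\<And>s t. s \<in> states X \<Longrightarrow> t \<in> states Y \<Longrightarrow> probset X s (\<pi> -` {t}) = prob Y (\<pi> s) t"
  shows "ctmc_strong_bisimilar X Y"
proof -
  let ?Z = "direct_sum X Y"
  define \<rho> where "\<rho> = case_sum \<pi> id"
  define Q where "Q = {(a, b). a \<in> states ?Z \<and> b \<in> states ?Z \<and> \<rho> a = \<rho> b}"
  have fin: "finite (states X)" "finite (states Y)" using X Y unfolding is_ctmc_def by auto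
  have \<rho>_Y: "\<rho> a \<in> states Y" "label ?Z a = label Y (\<rho> a)" "rate ?Z a = rate Y (\<rho> a)"
    if "a \<in> states ?Z" for a
    using that \<pi> label rate unfolding \<rho>_def by (auto simp: states_direct_sum)
  have Q_class: "Q `` {a} = {b \<in> states ?Z. \<rho> b = \<rho> a}" if "a \<in> states ?Z" for a
    using that unfolding Q_def by auto
  have "probset ?Z a {b \<in> states ?Z. \<rho> b = t} = prob Y (\<rho> a) t"
    if "a \<in> states ?Z" "t \<in> states Y" for a t
  proof (cases a)
    case (Inl s)
    then have "s \<in> states X" using that by (auto simp: states_direct_sum)
    have "probset ?Z a {b \<in> states ?Z. \<rho> b = t} = probset X s (Inl -` {b \<in> states ?Z. \<rho> b = t})"
      unfolding Inl by (rule probset_direct_sum_Inl[OF fin])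
    also have "\<dots> = probset X s (\<pi> -` {t})"
      unfolding probset_def \<rho>_def
      by (rule arg_cong[where f = "sum _"]) (auto simp: states_direct_sum)
    also have "\<dots> = prob Y (\<rho> a) t"
      using lump[OF \<open>s \<in> states X\<close> that(2)] Inl unfolding \<rho>_def by simp
    finally show ?thesis .
  next
    case (Inr s)
    have "probset ?Z a {b \<in> states ?Z. \<rho> b = t} = probset Y s (Inr -` {b \<in> states ?Z. \<rho> b = t})"
      unfolding Inr by (rule probset_direct_sum_Inr[OF fin])
    also have "\<dots> = probset Y s {t}"
      using that(2) unfolding probset_def \<rho>_def
      by (intro arg_cong[where f = "sum _"]) (auto simp: states_direct_sum)
    finally show ?thesis using that(2) Inr unfolding probset_def \<rho>_def by simp
  qed
  then have "strong_bisim ?Z Q"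
    using \<rho>_Y Q_class unfolding strong_bisim_def Q_def
    by (auto simp: equiv_def refl_on_def sym_def trans_def quotient_def)
  moreover have "(Inl (initial X), Inr (initial Y)) \<in> Q"
    using X Y initial unfolding Q_def \<rho>_def is_ctmc_def by (auto simp: states_direct_sum)
  ultimately show ?thesis unfolding ctmc_strong_bisimilar_def strong_bisimilar_def by auto
qed

section \<open>Isomorphic CTMCs\<close>

definition ctmc_iso :: "('a \<Rightarrow> 'b) \<Rightarrow> ('a, 'ap) ctmc \<Rightarrow> ('b, 'ap) ctmc \<Rightarrow> bool" where
  "ctmc_iso h X Y \<longleftrightarrow> inj_on h (states X) \<and> states Y = h ` states X \<and> initial Y = h (initial X) \<and>
     (\<forall>s\<in>states X. rate Y (h s) = rate X s \<and> label Y (h s) = label X s \<and>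
        (\<forall>t\<in>states X. prob Y (h s) (h t) = prob X s t))"

lemma ctmc_iso_id: "ctmc_iso id X X"
  by (simp add: ctmc_iso_def)

lemma ctmc_iso_direct_sum:
  assumes "ctmc_iso h1 X1 Y1" "ctmc_iso h2 X2 Y2"
  shows "ctmc_iso (map_sum h1 h2) (direct_sum X1 X2) (direct_sum Y1 Y2)"
proof -
  have inj: "inj_on h1 (states X1)" "inj_on h2 (states X2)"
    using assms unfolding ctmc_iso_def by blast+
  have "inj_on (map_sum h1 h2) (Inl ` states X1 \<union> Inr ` states X2)"
  proof (rule inj_onI)
    fix x y assume "x \<in> Inl ` states X1 \<union> Inr ` states X2" "y \<in> Inl ` states X1 \<union> Inr ` states X2"
      and "map_sum h1 h2 x = map_sum h1 h2 y"
    then show "x = y" by (auto simp: inj_on_eq_iff[OF inj(1)] inj_on_eq_iff[OF inj(2)])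
  qed
  then show ?thesis
    using assms unfolding ctmc_iso_def by (auto simp: states_direct_sum image_Un image_image)
qed

lemma probset_iso:
  assumes "ctmc_iso h X Y" "s \<in> states X"
  shows "probset Y (h s) A = probset X s (h -` A)"
proof -
  have inj: "inj_on h (h -` A \<inter> states X)" and "A \<inter> states Y = h ` (h -` A \<inter> states X)"
    using assms unfolding ctmc_iso_def by (auto intro: inj_on_subset)
  then have "probset Y (h s) A = (\<Sum>t\<in>h -` A \<inter> states X. prob Y (h s) (h t))"
    unfolding probset_def by (simp add: sum.reindex)
  also have "\<dots> = probset X s (h -` A)"
    using assms unfolding probset_def ctmc_iso_def by (intro sum.cong) auto
  finally show ?thesis .
qed

lemma vimage_Image_map_prod:
  assumes "inj_on h S" "R \<subseteq> S \<times> S"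
  shows "h -` ((map_prod h h ` R) `` A) \<inter> S = R `` (h -` A \<inter> S)"
proof (intro equalityI subsetI)
  fix z assume "z \<in> h -` ((map_prod h h ` R) `` A) \<inter> S"
  then obtain a b where ab: "(a, b) \<in> R" "h a \<in> A" "h b = h z" "z \<in> S" by auto
  moreover have "b = z" using inj_onD[OF assms(1) ab(3)] ab assms(2) by blast
  ultimately show "z \<in> R `` (h -` A \<inter> S)" using assms(2) by blast
next
  fix z assume "z \<in> R `` (h -` A \<inter> S)"
  then show "z \<in> h -` ((map_prod h h ` R) `` A) \<inter> S" using assms(2) by force
qed

lemma eps_delta_bisimilar_iso:
  assumes iso: "ctmc_iso h X Y" and "eps_delta_bisimilar e d X s s'"
  shows "eps_delta_bisimilar e d Y (h s) (h s')"
proof -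
  obtain R where R: "eps_delta_bisim e d X R" "(s, s') \<in> R"
    using assms(2) unfolding eps_delta_bisimilar_def by blast
  have sub: "R \<subseteq> states X \<times> states X" using R(1) unfolding eps_delta_bisim_def by blast
  define R' where "R' = map_prod h h ` R"
  have "label Y (h a) = label Y (h b) \<and> \<bar>ln (rate Y (h a)) - ln (rate Y (h b))\<bar> \<le> d \<and>
      (\<forall>A\<subseteq>states Y. probset Y (h a) A \<le> probset Y (h b) (R' `` A) + e)" if ab: "(a, b) \<in> R" for a b
  proof (intro conjI allI impI)
    note cond = eps_delta_bisimD[OF R(1) ab]
    show "label Y (h a) = label Y (h b)" "\<bar>ln (rate Y (h a)) - ln (rate Y (h b))\<bar> \<le> d"
      using cond iso unfolding ctmc_iso_def by auto
    fix A
    have "probset Y (h a) A = probset X a (h -` A \<inter> states X)"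
      using probset_iso[OF iso cond(1)] unfolding probset_def by (simp add: Int_assoc)
    also have "\<dots> \<le> probset X b (R `` (h -` A \<inter> states X)) + e"
      using cond(6) by blast
    also have "R `` (h -` A \<inter> states X) = h -` (R' `` A) \<inter> states X"
      unfolding R'_def using iso sub by (simp add: vimage_Image_map_prod ctmc_iso_def)
    also have "probset X b \<dots> = probset Y (h b) (R' `` A)"
      using probset_iso[OF iso cond(2)] unfolding probset_def by (simp add: Int_assoc)
    finally show "probset Y (h a) A \<le> probset Y (h b) (R' `` A) + e" .
  qed
  moreover have "R' \<subseteq> states Y \<times> states Y" "refl_on (states Y) R'" "sym R'"
    using R(1) iso sub unfolding eps_delta_bisim_def ctmc_iso_def R'_def refl_on_def sym_def
    by auto
  ultimately have "eps_delta_bisim e d Y R'"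
    unfolding eps_delta_bisim_def R'_def by auto
  then show ?thesis using R(2) unfolding eps_delta_bisimilar_def R'_def by blast
qed

lemma equiv_map_prod_image:
  assumes inj: "inj_on h A" and eqv: "equiv A R"
  shows "equiv (h ` A) (map_prod h h ` R)"
proof (rule equivI)
  have sub: "R \<subseteq> A \<times> A" using eqv by (rule equiv_type)
  then show "map_prod h h ` R \<subseteq> h ` A \<times> h ` A" by auto
  show "refl_on (h ` A) (map_prod h h ` R)"
    using eqv sub unfolding equiv_def refl_on_def by auto
  show "sym (map_prod h h ` R)"
    using eqv unfolding equiv_def sym_def by auto
  show "trans (map_prod h h ` R)"
  proof (rule transI)
    fix x y z assume "(x, y) \<in> map_prod h h ` R" "(y, z) \<in> map_prod h h ` R"
    then obtain a b b' c where ab: "(a, b) \<in> R" "(b', c) \<in> R" "h b = h b'" "x = h a" "z = h c"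
      by auto
    then have "b = b'" using inj_onD[OF inj ab(3)] sub by blast
    then show "(x, z) \<in> map_prod h h ` R"
      using ab eqv unfolding equiv_def trans_def by blast
  qed
qed

lemma vimage_quotient_map_prod:
  assumes C: "C \<in> (h ` S) // (map_prod h h ` R)" and inj: "inj_on h S" and eqv: "equiv S R"
  shows "h -` C \<inter> S \<in> S // R"
proof -
  obtain w where w: "w \<in> S" "C = (map_prod h h ` R) `` {h w}"
    using C by (auto elim!: quotientE)
  have "h -` C \<inter> S = R `` (h -` {h w} \<inter> S)"
    unfolding w(2) using inj equiv_type[OF eqv] by (rule vimage_Image_map_prod)
  also have "h -` {h w} \<inter> S = {w}" using inj w(1) by (auto dest: inj_onD)
  finally show ?thesis using w(1) by (simp add: quotientI)
qed

lemma strong_bisimilar_iso: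
  assumes iso: "ctmc_iso h X Y" and "strong_bisimilar X s s'"
  shows "strong_bisimilar Y (h s) (h s')"
proof -
  obtain R where R: "strong_bisim X R" "(s, s') \<in> R"
    using assms(2) unfolding strong_bisimilar_def by blast
  have eqv: "equiv (states X) R" using R(1) unfolding strong_bisim_def by blast
  have sub: "R \<subseteq> states X \<times> states X" using eqv by (rule equiv_type)
  have inj: "inj_on h (states X)" and states: "states Y = h ` states X"
    using iso unfolding ctmc_iso_def by blast+
  define R' where "R' = map_prod h h ` R"
  have classes: "h -` C \<inter> states X \<in> states X // R" if "C \<in> states Y // R'" for C
    using that unfolding states R'_def using inj eqv by (rule vimage_quotient_map_prod)
  have "label Y (h a) = label Y (h b) \<and> rate Y (h a) = rate Y (h b) \<and>
      (\<forall>C\<in>states Y // R'. probset Y (h a) C = probset Y (h b) C)" if ab: "(a, b) \<in> R" for a b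
  proof (intro conjI ballI)
    have a: "a \<in> states X" and b: "b \<in> states X" using ab sub by auto
    have cond: "label X a = label X b" "rate X a = rate X b"
      "\<And>C. C \<in> states X // R \<Longrightarrow> probset X a C = probset X b C"
      using R(1) ab unfolding strong_bisim_def by auto
    show "label Y (h a) = label Y (h b)" "rate Y (h a) = rate Y (h b)"
      using cond a b iso unfolding ctmc_iso_def by auto
    fix C assume "C \<in> states Y // R'"
    then have "probset X a (h -` C \<inter> states X) = probset X b (h -` C \<inter> states X)"
      using cond(3) classes by blast
    then show "probset Y (h a) C = probset Y (h b) C"
      using probset_iso[OF iso a] probset_iso[OF iso b]
      unfolding probset_def by (simp add: Int_assoc)
  qed
  moreover have "equiv (states Y) R'"
    unfolding states R'_def using inj eqv by (rule equiv_map_prod_image)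
  ultimately have "strong_bisim Y R'" unfolding strong_bisim_def R'_def by auto
  then show ?thesis using R(2) unfolding strong_bisimilar_def R'_def by blast
qed

lemma ctmc_eps_delta_bisimilar_iso:
  assumes "ctmc_iso h1 X1 Y1" "ctmc_iso h2 X2 Y2" "ctmc_eps_delta_bisimilar e d X1 X2"
  shows "ctmc_eps_delta_bisimilar e d Y1 Y2"
  using eps_delta_bisimilar_iso[OF ctmc_iso_direct_sum[OF assms(1,2)]] assms
  unfolding ctmc_eps_delta_bisimilar_def ctmc_iso_def by fastforce

lemma ctmc_strong_bisimilar_iso:
  assumes "ctmc_iso h1 X1 Y1" "ctmc_iso h2 X2 Y2" "ctmc_strong_bisimilar X1 X2"
  shows "ctmc_strong_bisimilar Y1 Y2"
  using strong_bisimilar_iso[OF ctmc_iso_direct_sum[OF assms(1,2)]] assms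
  unfolding ctmc_strong_bisimilar_def ctmc_iso_def by fastforce

lemma same_graph_iso:
  assumes "ctmc_iso h X1 Y1" "ctmc_iso h X2 Y2" "same_graph X1 X2"
  shows "same_graph Y1 Y2"
  using assms unfolding same_graph_def ctmc_iso_def by auto

definition rename_ctmc :: "('a \<Rightarrow> 'b) \<Rightarrow> ('a, 'ap) ctmc \<Rightarrow> ('b, 'ap) ctmc" where
  "rename_ctmc h X = \<lparr>states = h ` states X,
     prob = (\<lambda>a b. if a \<in> h ` states X \<and> b \<in> h ` states X
                   then prob X (inv_into (states X) h a) (inv_into (states X) h b) else 0),
     rate = (\<lambda>a. rate X (inv_into (states X) h a)),
     initial = h (initial X),
     label = (\<lambda>a. label X (inv_into (states X) h a))\<rparr>"

lemma ctmc_iso_rename: "inj_on h (states X) \<Longrightarrow> ctmc_iso h X (rename_ctmc h X)"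
  by (simp add: ctmc_iso_def rename_ctmc_def)

lemma is_ctmc_rename:
  assumes inj: "inj_on h (states X)" and X: "is_ctmc X"
  shows "is_ctmc (rename_ctmc h X)"
proof -
  have "sum (prob (rename_ctmc h X) (h s)) (h ` states X) = sum (prob X s) (states X)"
    if "s \<in> states X" for s
    using that inj by (simp add: sum.reindex rename_ctmc_def)
  then show ?thesis
    using X inj unfolding is_ctmc_def by (auto simp: rename_ctmc_def)
qed

section \<open>The coupled chains\<close>

lemma sum_le_sum_plus_excess:
  fixes f g h :: "'a \<Rightarrow> real"
  assumes "finite S" "E \<subseteq> S" "\<forall>a\<in>S. g a \<le> f a" "\<forall>a\<in>E. g a \<le> h a" "sum f S - sum g S \<le> e"
  shows "sum f E \<le> sum h E + e"
proof -
  have "sum (\<lambda>a. f a - g a) E \<le> sum (\<lambda>a. f a - g a) S"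
    using assms(1-3) by (intro sum_mono2) auto
  moreover have "sum g E \<le> sum h E" using assms(4) by (simp add: sum_mono)
  ultimately show ?thesis using assms(5) by (simp add: sum_subtractf)
qed

locale eps_delta_bisimilar_ctmcs =
  fixes M :: "('s, 'ap) ctmc" and N :: "('t, 'ap) ctmc" and R :: "('s + 't) rel" and \<epsilon> \<delta> :: real
  assumes is_ctmc_M: "is_ctmc M" and is_ctmc_N: "is_ctmc N"
    and eps_nonneg: "0 \<le> \<epsilon>" and delta_nonneg: "0 \<le> \<delta>"
    and bisim: "eps_delta_bisim \<epsilon> \<delta> (direct_sum M N) R"
    and initial_related: "(Inl (initial M), Inr (initial N)) \<in> R"
begin

abbreviation D :: "('s + 't, 'ap) ctmc" where "D \<equiv> direct_sum M N"

lemma is_ctmc_D: "is_ctmc D"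
  using is_ctmc_M is_ctmc_N by (rule is_ctmc_direct_sum)

lemma finite_states: "finite (states M)" "finite (states N)" "finite (states D)"
  using is_ctmc_M is_ctmc_N is_ctmc_D unfolding is_ctmc_def by blast+

definition pairs :: "(('s + 't) \<times> 't) set" where
  "pairs = {(x, w). (x, Inr w) \<in> R}"

abbreviation paired :: "('s + 't) \<Rightarrow> 't \<Rightarrow> bool" where
  "paired a b \<equiv> (a, b) \<in> pairs"

lemma pairs_subset: "pairs \<subseteq> states D \<times> states N"
  using bisim unfolding pairs_def eps_delta_bisim_def by (auto simp: states_direct_sum)

lemma finite_pairs: "finite pairs"
  using pairs_subset finite_states by (auto intro: finite_subset)

lemma initial_pair: "(Inl (initial M), initial N) \<in> pairs"
  using initial_related unfolding pairs_def by simp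

lemma diagonal_pair: "w \<in> states N \<Longrightarrow> (Inr w, w) \<in> pairs"
  using bisim unfolding pairs_def eps_delta_bisim_def refl_on_def by (auto simp: states_direct_sum)

lemma pair_label: "c \<in> pairs \<Longrightarrow> label D (fst c) = label N (snd c)"
  using eps_delta_bisimD(4)[OF bisim, of "fst c" "Inr (snd c)"] unfolding pairs_def by auto

lemma pair_rate: "c \<in> pairs \<Longrightarrow> \<bar>ln (rate D (fst c)) - ln (rate N (snd c))\<bar> \<le> \<delta>"
  using eps_delta_bisimD(5)[OF bisim, of "fst c" "Inr (snd c)"] unfolding pairs_def by auto

lemma pair_approx_hall:
  assumes "c \<in> pairs" "A \<subseteq> states N"
  shows "sum (prob N (snd c)) A \<le> sum (prob D (fst c)) (nbhd paired (states D) A) + \<epsilon>"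
proof -
  have "(Inr (snd c), fst c) \<in> R"
    using assms(1) eps_delta_bisimD(3)[OF bisim] unfolding pairs_def by auto
  moreover have "Inr ` A \<subseteq> states D" using assms(2) by (auto simp: states_direct_sum)
  ultimately have "probset D (Inr (snd c)) (Inr ` A) \<le> probset D (fst c) (R `` Inr ` A) + \<epsilon>"
    using eps_delta_bisimD(6)[OF bisim] by blast
  moreover have "probset D (Inr (snd c)) (Inr ` A) = sum (prob N (snd c)) A"
    unfolding probset_direct_sum_Inr[OF finite_states(1,2)] using assms(2)
    by (simp add: probset_def inj_vimage_image_eq Int_absorb2)
  moreover have "R `` Inr ` A \<inter> states D = nbhd paired (states D) A"
    using eps_delta_bisimD(3)[OF bisim] unfolding pairs_def nbhd_def by blast
  ultimately show ?thesis unfolding probset_def by simp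
qed

definition partial_coupling :: "('s + 't) \<times> 't \<Rightarrow> ('s + 't) \<Rightarrow> 't \<Rightarrow> real" where
  "partial_coupling c = (SOME f.
     transport paired (states D) (states N) (prob D (fst c)) (prob N (snd c)) f \<and>
     1 - \<epsilon> \<le> (\<Sum>a\<in>states D. sum (f a) (states N)))"

lemma partial_coupling:
  assumes "c \<in> pairs"
  shows "transport paired (states D) (states N) (prob D (fst c)) (prob N (snd c)) (partial_coupling c)"
    and "1 - \<epsilon> \<le> (\<Sum>a\<in>states D. sum (partial_coupling c a) (states N))"
proof -
  have c: "fst c \<in> states D" "snd c \<in> states N" using assms pairs_subset by auto
  then have "sum (prob N (snd c)) (states N) = 1" using is_ctmc_N unfolding is_ctmc_def by blast
  moreover have "\<exists>f. transport paired (states D) (states N) (prob D (fst c)) (prob N (snd c)) f \<and>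
      sum (prob N (snd c)) (states N) - \<epsilon> \<le> (\<Sum>a\<in>states D. sum (f a) (states N))"
    using finite_states(3,2) _ _ eps_nonneg pair_approx_hall[OF assms]
    by (rule transport_exists_approx_hall) (use c is_ctmc_D is_ctmc_N in \<open>auto simp: is_ctmc_def\<close>)
  ultimately show "transport paired (states D) (states N) (prob D (fst c)) (prob N (snd c))
      (partial_coupling c)" and "1 - \<epsilon> \<le> (\<Sum>a\<in>states D. sum (partial_coupling c a) (states N))"
    using someI_ex[where P = "\<lambda>f. transport paired (states D) (states N) (prob D (fst c))
      (prob N (snd c)) f \<and> 1 - \<epsilon> \<le> (\<Sum>a\<in>states D. sum (f a) (states N))"]
    unfolding partial_coupling_def by simp_all
qed

text \<open>The demand of \<open>b\<close> left unmet by the partial coupling is routed through the pair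
  \<open>(Inr b, b)\<close>, which lies in \<open>pairs\<close> by reflexivity of \<open>R\<close>.\<close>

definition coupling :: "('s + 't) \<times> 't \<Rightarrow> ('s + 't) \<Rightarrow> 't \<Rightarrow> real" where
  "coupling c a b = partial_coupling c a b +
     (if a = Inr b then prob N (snd c) b - (\<Sum>a'\<in>states D. partial_coupling c a' b) else 0)"

definition coupled_ctmc ::
    "(('s + 't) \<times> 't \<Rightarrow> real) \<Rightarrow> (('s + 't) \<times> 't \<Rightarrow> 'ap set) \<Rightarrow> (('s + 't) \<times> 't, 'ap) ctmc" where
  "coupled_ctmc r l = \<lparr>states = pairs,
     prob = (\<lambda>c d. if d \<in> pairs then coupling c (fst d) (snd d) else 0),
     rate = r, initial = (Inl (initial M), initial N), label = l\<rparr>"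

abbreviation M_coupled :: "(('s + 't) \<times> 't, 'ap) ctmc" where
  "M_coupled \<equiv> coupled_ctmc (\<lambda>c. rate D (fst c)) (\<lambda>c. label D (fst c))"

abbreviation N_coupled :: "(('s + 't) \<times> 't, 'ap) ctmc" where
  "N_coupled \<equiv> coupled_ctmc (\<lambda>c. rate N (snd c)) (\<lambda>c. label N (snd c))"

context
  fixes c assumes c: "c \<in> pairs"
begin

lemma partial_coupling_nonneg: "0 \<le> partial_coupling c a b"
  and partial_coupling_nonzero:
    "partial_coupling c a b \<noteq> 0 \<Longrightarrow> a \<in> states D \<and> b \<in> states N \<and> (a, b) \<in> pairs"
  and partial_coupling_row:
    "a \<in> states D \<Longrightarrow> sum (partial_coupling c a) (states N) \<le> prob D (fst c) a"
  and partial_coupling_column: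
    "b \<in> states N \<Longrightarrow> (\<Sum>a\<in>states D. partial_coupling c a b) \<le> prob N (snd c) b"
  using partial_coupling(1)[OF c] unfolding transport_def by blast+

lemma unmet_demand_outside:
  "b \<notin> states N \<Longrightarrow> prob N (snd c) b - (\<Sum>a\<in>states D. partial_coupling c a b) = 0"
proof -
  assume b: "b \<notin> states N"
  then have "partial_coupling c a b = 0" for a using partial_coupling_nonzero by blast
  moreover have "snd c \<in> states N" using c pairs_subset by auto
  ultimately show ?thesis using b is_ctmc_N unfolding is_ctmc_def by simp
qed

lemma unmet_demand_nonneg: "0 \<le> prob N (snd c) b - (\<Sum>a\<in>states D. partial_coupling c a b)"
  using partial_coupling_column unmet_demand_outside by (cases "b \<in> states N") simp_all

lemma partial_coupling_le_coupling: "partial_coupling c a b \<le> coupling c a b"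
  using unmet_demand_nonneg unfolding coupling_def by simp

lemma coupling_nonneg: "0 \<le> coupling c a b"
  using partial_coupling_nonneg partial_coupling_le_coupling by (rule order_trans)

lemma coupling_nonzero: "coupling c a b \<noteq> 0 \<Longrightarrow> (a, b) \<in> pairs"
proof (cases "partial_coupling c a b = 0")
  case True
  assume "coupling c a b \<noteq> 0"
  then have "a = Inr b" "b \<in> states N"
    using True unmet_demand_outside unfolding coupling_def by (auto split: if_splits)
  then show ?thesis using diagonal_pair by simp
qed (use partial_coupling_nonzero in blast)

lemma coupling_column: "b \<in> states N \<Longrightarrow> (\<Sum>a\<in>states D. coupling c a b) = prob N (snd c) b"
  unfolding coupling_def using finite_states(3) by (simp add: sum.distrib states_direct_sum)

lemma probset_coupled:
  "probset (coupled_ctmc r l) c A = (\<Sum>d\<in>A \<inter> (states D \<times> states N). coupling c (fst d) (snd d))"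
proof -
  have "probset (coupled_ctmc r l) c A = (\<Sum>d\<in>A \<inter> pairs. coupling c (fst d) (snd d))"
    unfolding probset_def coupled_ctmc_def by simp
  also have "\<dots> = (\<Sum>d\<in>A \<inter> (states D \<times> states N). coupling c (fst d) (snd d))"
    using pairs_subset finite_states coupling_nonzero
    by (intro sum.mono_neutral_left) auto
  finally show ?thesis .
qed

lemma probset_coupled_snd: "probset (coupled_ctmc r l) c (snd -` B) = probset N (snd c) B"
proof -
  have "snd -` B \<inter> (states D \<times> states N) = states D \<times> (B \<inter> states N)" by auto
  then have "probset (coupled_ctmc r l) c (snd -` B) =
      (\<Sum>a\<in>states D. \<Sum>b\<in>B \<inter> states N. coupling c a b)"
    unfolding probset_coupled by (simp add: sum.cartesian_product case_prod_beta')
  also have "\<dots> = (\<Sum>b\<in>B \<inter> states N. \<Sum>a\<in>states D. coupling c a b)"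
    by (rule sum.swap)
  also have "\<dots> = probset N (snd c) B"
    unfolding probset_def by (intro sum.cong) (simp_all add: coupling_column)
  finally show ?thesis .
qed

lemma probset_coupled_fst:
  "probset (coupled_ctmc r l) c (fst -` E) = (\<Sum>a\<in>E \<inter> states D. sum (coupling c a) (states N))"
proof -
  have "fst -` E \<inter> (states D \<times> states N) = (E \<inter> states D) \<times> states N" by auto
  then show ?thesis
    unfolding probset_coupled by (simp add: sum.cartesian_product case_prod_beta')
qed

lemma probset_coupled_UNIV: "probset (coupled_ctmc r l) c UNIV = 1"
proof -
  have "snd c \<in> states N" using c pairs_subset by auto
  then show ?thesis
    using probset_coupled_snd[of r l UNIV] is_ctmc_N unfolding is_ctmc_def probset_def by simp
qed

lemma probset_le_coupled_fst: "probset D (fst c) E \<le> probset (coupled_ctmc r l) c (fst -` E) + \<epsilon>"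
proof -
  have "fst c \<in> states D" using c pairs_subset by auto
  then have "sum (prob D (fst c)) (states D) = 1" using is_ctmc_D unfolding is_ctmc_def by blast
  then have "sum (prob D (fst c)) (E \<inter> states D) \<le>
      (\<Sum>a\<in>E \<inter> states D. sum (coupling c a) (states N)) + \<epsilon>"
    using finite_states(3) partial_coupling_row partial_coupling(2)[OF c]
      partial_coupling_le_coupling
    by (intro sum_le_sum_plus_excess[where g = "\<lambda>a. sum (partial_coupling c a) (states N)"])
      (auto intro: sum_mono)
  then show ?thesis unfolding probset_coupled_fst probset_def[of D] .
qed

lemma coupled_fst_le_probset: "probset (coupled_ctmc r l) c (fst -` E) \<le> probset D (fst c) E + \<epsilon>"
proof -
  have "(\<Sum>a\<in>states D. sum (coupling c a) (states N)) = 1"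
    using probset_coupled_UNIV probset_coupled_fst[of r l UNIV] by simp
  then have "(\<Sum>a\<in>E \<inter> states D. sum (coupling c a) (states N)) \<le>
      sum (prob D (fst c)) (E \<inter> states D) + \<epsilon>"
    using finite_states(3) partial_coupling_row partial_coupling(2)[OF c]
      partial_coupling_le_coupling
    by (intro sum_le_sum_plus_excess[where g = "\<lambda>a. sum (partial_coupling c a) (states N)"])
      (auto intro: sum_mono)
  then show ?thesis unfolding probset_coupled_fst probset_def[of D] .
qed

end

lemma is_ctmc_coupled_ctmc:
  assumes "\<And>c. c \<in> pairs \<Longrightarrow> 0 < r c"
  shows "is_ctmc (coupled_ctmc r l)"
  using assms finite_pairs initial_pair coupling_nonneg probset_coupled_UNIV
  unfolding is_ctmc_def probset_def by (auto simp: coupled_ctmc_def)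

lemma is_ctmc_M_coupled: "is_ctmc M_coupled"
  by (rule is_ctmc_coupled_ctmc) (use pairs_subset is_ctmc_D in \<open>auto simp: is_ctmc_def\<close>)

lemma is_ctmc_N_coupled: "is_ctmc N_coupled"
  by (rule is_ctmc_coupled_ctmc) (use pairs_subset is_ctmc_N in \<open>auto simp: is_ctmc_def\<close>)

lemma same_graph_coupled: "same_graph M_coupled N_coupled"
  using pair_label unfolding same_graph_def by (simp add: coupled_ctmc_def)

lemma M_coupled_N_coupled_bisimilar: "ctmc_eps_delta_bisimilar 0 \<delta> M_coupled N_coupled"
  using is_ctmc_M_coupled is_ctmc_N_coupled _ _ _ _ _ delta_nonneg
  by (rule ctmc_eps_delta_bisimilar_perturb_rates)
    (auto simp: coupled_ctmc_def pair_label pair_rate)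

lemma N_coupled_strong_bisimilar: "ctmc_strong_bisimilar N_coupled N"
  using is_ctmc_N_coupled is_ctmc_N
proof (rule ctmc_strong_bisimilar_lumping[where \<pi> = snd])
  fix c t assume "c \<in> states N_coupled" "t \<in> states N"
  then show "probset N_coupled c (snd -` {t}) = prob N (snd c) t"
    using probset_coupled_snd[of c _ _ "{t}"] by (simp add: coupled_ctmc_def probset_def)
qed (use pairs_subset in \<open>auto simp: coupled_ctmc_def\<close>)

context
  fixes c u assumes c: "c \<in> pairs" and fst_c: "fst c = Inl u"
begin

lemma probset_M_le_M_coupled: "probset M u B \<le> probset M_coupled c (fst -` Inl ` B) + \<epsilon>"
  using probset_le_coupled_fst[OF c, where E = "Inl ` B"] fst_c
  by (simp add: probset_direct_sum_Inl[OF finite_states(1,2)] inj_vimage_image_eq)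

lemma M_coupled_le_probset_M: "probset M_coupled c A \<le> probset M u (Inl -` fst ` (A \<inter> pairs)) + \<epsilon>"
proof -
  have "probset M_coupled c A \<le> probset M_coupled c (fst -` fst ` (A \<inter> pairs))"
    using c is_ctmc_M_coupled by (intro probset_mono) (auto simp: coupled_ctmc_def)
  also have "\<dots> \<le> probset D (fst c) (fst ` (A \<inter> pairs)) + \<epsilon>"
    by (rule coupled_fst_le_probset[OF c])
  finally show ?thesis using fst_c by (simp add: probset_direct_sum_Inl[OF finite_states(1,2)])
qed

end

definition M_link :: "('s + ('s + 't) \<times> 't) rel" where
  "M_link = {(Inl u, Inr c) | u c. c \<in> pairs \<and> fst c = Inl u}"

lemma probset_M_link:
  fixes Z defines "Z \<equiv> direct_sum M M_coupled"
  assumes ab: "(a, b) \<in> M_link \<union> M_link\<inverse>"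
  shows "probset Z a A \<le> probset Z b ((Id_on (states Z) \<union> M_link \<union> M_link\<inverse>) `` A) + \<epsilon>"
proof -
  let ?QA = "(Id_on (states Z) \<union> M_link \<union> M_link\<inverse>) `` A"
  have fin: "finite (states M)" "finite (states M_coupled)"
    using finite_states(1) finite_pairs by (simp_all add: coupled_ctmc_def)
  obtain u c where c: "c \<in> pairs" "fst c = Inl u"
    and "(a, b) = (Inl u, Inr c) \<or> (a, b) = (Inr c, Inl u)"
    using ab unfolding M_link_def by blast
  then consider "a = Inl u" "b = Inr c" | "a = Inr c" "b = Inl u" by blast
  then show ?thesis
  proof cases
    case 1
    have "fst -` Inl ` Inl -` A \<inter> pairs \<subseteq> Inr -` ?QA"
      unfolding M_link_def by force
    then have "probset M_coupled c (fst -` Inl ` Inl -` A) \<le> probset M_coupled c (Inr -` ?QA)"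
      using c is_ctmc_M_coupled by (intro probset_mono) (auto simp: coupled_ctmc_def)
    then show ?thesis
      using probset_M_le_M_coupled[OF c, of "Inl -` A"]
      unfolding 1 Z_def probset_direct_sum_Inl[OF fin] probset_direct_sum_Inr[OF fin] by simp
  next
    case 2
    have "Inl -` fst ` (Inr -` A \<inter> pairs) \<inter> states M \<subseteq> Inl -` ?QA"
    proof
      fix u' assume "u' \<in> Inl -` fst ` (Inr -` A \<inter> pairs) \<inter> states M"
      then obtain d where "d \<in> pairs" "Inr d \<in> A" "fst d = Inl u'" by auto
      then show "u' \<in> Inl -` ?QA" unfolding M_link_def by blast
    qed
    moreover have "u \<in> states M" using c pairs_subset by (auto simp: states_direct_sum)
    ultimately have "probset M u (Inl -` fst ` (Inr -` A \<inter> pairs)) \<le> probset M u (Inl -` ?QA)"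
      using is_ctmc_M by (intro probset_mono)
    then show ?thesis
      using M_coupled_le_probset_M[OF c, of "Inr -` A"]
      unfolding 2 Z_def probset_direct_sum_Inl[OF fin] probset_direct_sum_Inr[OF fin] by simp
  qed
qed

lemma M_coupled_bisimilar: "ctmc_eps_delta_bisimilar \<epsilon> 0 M M_coupled"
  unfolding ctmc_eps_delta_bisimilar_def
proof (rule eps_delta_bisimilar_generated[OF is_ctmc_direct_sum[OF is_ctmc_M is_ctmc_M_coupled]
      eps_nonneg order_refl, where L = M_link])
  show "M_link \<subseteq> states (direct_sum M M_coupled) \<times> states (direct_sum M M_coupled)"
    using pairs_subset unfolding M_link_def by (auto simp: states_direct_sum coupled_ctmc_def)
  show "(Inl (initial M), Inr (initial M_coupled)) \<in> M_link"
    using initial_pair unfolding M_link_def by (simp add: coupled_ctmc_def)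
  show "label (direct_sum M M_coupled) a = label (direct_sum M M_coupled) b"
    "\<bar>ln (rate (direct_sum M M_coupled) a) - ln (rate (direct_sum M M_coupled) b)\<bar> \<le> 0"
    if "(a, b) \<in> M_link" for a b
    using that unfolding M_link_def by (auto simp: coupled_ctmc_def)
qed (rule probset_M_link)

end

theorem theorem3:
  fixes \<epsilon> \<delta> :: real
    and M :: "('s, 'ap) ctmc" and N :: "('t, 'ap) ctmc"
  assumes "\<epsilon> \<ge> 0" and "\<delta> \<ge> 0"
    and "is_ctmc M" and "is_ctmc N"
    and "ctmc_eps_delta_bisimilar \<epsilon> \<delta> M N"
  shows "\<exists>M' N' :: (nat, 'ap) ctmc.
           is_ctmc M' \<and> is_ctmc N' \<and> same_graph M' N' \<and>
           ctmc_eps_delta_bisimilar \<epsilon> 0 M M' \<and>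
           ctmc_eps_delta_bisimilar 0 \<delta> M' N' \<and>
           ctmc_strong_bisimilar N' N"
proof -
  obtain R where "eps_delta_bisim \<epsilon> \<delta> (direct_sum M N) R" "(Inl (initial M), Inr (initial N)) \<in> R"
    using assms(5) unfolding ctmc_eps_delta_bisimilar_def eps_delta_bisimilar_def by blast
  then interpret eps_delta_bisimilar_ctmcs M N R \<epsilon> \<delta>
    using assms(1-4) by unfold_locales
  obtain g :: "('s + 't) \<times> 't \<Rightarrow> nat" where g: "inj_on g pairs"
    using finite_imp_inj_to_nat_seg[OF finite_pairs] by blast
  then have iso: "ctmc_iso g M_coupled (rename_ctmc g M_coupled)"
      "ctmc_iso g N_coupled (rename_ctmc g N_coupled)"
    by (simp_all add: ctmc_iso_rename coupled_ctmc_def)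
  show ?thesis
  proof (intro exI conjI)
    show "is_ctmc (rename_ctmc g M_coupled)" "is_ctmc (rename_ctmc g N_coupled)"
      using g is_ctmc_M_coupled is_ctmc_N_coupled by (simp_all add: is_ctmc_rename coupled_ctmc_def)
    show "same_graph (rename_ctmc g M_coupled) (rename_ctmc g N_coupled)"
      using iso same_graph_coupled by (rule same_graph_iso)
    show "ctmc_eps_delta_bisimilar \<epsilon> 0 M (rename_ctmc g M_coupled)"
      using ctmc_iso_id iso(1) M_coupled_bisimilar by (rule ctmc_eps_delta_bisimilar_iso)
    show "ctmc_eps_delta_bisimilar 0 \<delta> (rename_ctmc g M_coupled) (rename_ctmc g N_coupled)"
      using iso M_coupled_N_coupled_bisimilar by (rule ctmc_eps_delta_bisimilar_iso)
    show "ctmc_strong_bisimilar (rename_ctmc g N_coupled) N"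
      using iso(2) ctmc_iso_id N_coupled_strong_bisimilar by (rule ctmc_strong_bisimilar_iso)
  qed
qed

end
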